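(* For $m=1,\dots,N$ let $\mathcal{E}^{(m)}=\{\sigma^{(m)}_i,q^{(m)}_i\}_{i=1}^{k_m}$ be an ensemble of states on a finite-dimensional space $\mathcal H_m$, and let $\{\Pi^{(m)}_i\}_{i=1}^{k_m}$ be a POVM attaining the optimal minimum-error success probability for $\mathcal E^{(m)}$. Then the product POVM $\{\Pi^{(1)}_{i_1}\otimes\cdots\otimes\Pi^{(N)}_{i_N}\}$ attains the optimal minimum-error success probability for the product ensemble $\{\sigma^{(1)}_{i_1}\otimes\cdots\otimes\sigma^{(N)}_{i_N},\,q^{(1)}_{i_1}\cdots q^{(N)}_{i_N}\}$ on $\mathcal H_1\otimes\cdots\otimes\mathcal H_N$. Consequently the product ensemble can be optimally distinguished by $N$-party LOCC (each party $m$ measuring $\{\Pi^{(m)}_i\}$ locally).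
   Context: For an ensemble $\{\rho_i,p_i\}$, the success probability of a POVM $\{\Pi_i\}$ is $\sum_ip_i\,\mathrm{tr}(\Pi_i\rho_i)$; the optimal minimum-error success probability is its maximum over all POVMs with the same index set. Party $m$ holds system $\mathcal H_m$. *)

theory Defs
  imports "Jordan_Normal_Form.Matrix" "Jordan_Normal_Form.Schur_Decomposition"
begin

definition mtrace :: "complex mat \<Rightarrow> complex" where
  "mtrace A = (\<Sum>i<dim_row A. A $$ (i,i))"

definition psd :: "nat \<Rightarrow> complex mat \<Rightarrow> bool" where
  "psd n A \<longleftrightarrow> A \<in> carrier_mat n n \<and> mat_adjoint A = A \<and>
     (\<forall>v \<in> carrier_vec n. Im ((A *\<^sub>v v) \<bullet>c v) = 0 \<and> Re ((A *\<^sub>v v) \<bullet>c v) \<ge> 0)"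

definition density :: "nat \<Rightarrow> complex mat \<Rightarrow> bool" where
  "density n \<rho> \<longleftrightarrow> psd n \<rho> \<and> mtrace \<rho> = 1"

definition msum :: "nat \<Rightarrow> ('i \<Rightarrow> complex mat) \<Rightarrow> 'i set \<Rightarrow> complex mat" where
  "msum n M I = mat n n (\<lambda>(a,b). \<Sum>i\<in>I. M i $$ (a,b))"

definition povm :: "nat \<Rightarrow> 'i set \<Rightarrow> ('i \<Rightarrow> complex mat) \<Rightarrow> bool" where
  "povm n I P \<longleftrightarrow> finite I \<and> (\<forall>i\<in>I. psd n (P i)) \<and> msum n P I = 1\<^sub>m n"

definition ensemble :: "nat \<Rightarrow> 'i set \<Rightarrow> ('i \<Rightarrow> real) \<Rightarrow> ('i \<Rightarrow> complex mat) \<Rightarrow> bool" where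
  "ensemble n I p \<rho> \<longleftrightarrow> finite I \<and> (\<forall>i\<in>I. p i \<ge> 0 \<and> density n (\<rho> i)) \<and> (\<Sum>i\<in>I. p i) = 1"

(* success probability sum_i p_i tr(P_i rho_i) (real-valued for PSD operators) *)
definition success :: "'i set \<Rightarrow> ('i \<Rightarrow> real) \<Rightarrow> ('i \<Rightarrow> complex mat) \<Rightarrow> ('i \<Rightarrow> complex mat) \<Rightarrow> real" where
  "success I p \<rho> P = (\<Sum>i\<in>I. p i * Re (mtrace (P i * \<rho> i)))"

definition optimal_povm :: "nat \<Rightarrow> 'i set \<Rightarrow> ('i \<Rightarrow> real) \<Rightarrow> ('i \<Rightarrow> complex mat) \<Rightarrow> ('i \<Rightarrow> complex mat) \<Rightarrow> bool" where
  "optimal_povm n I p \<rho> P \<longleftrightarrow> povm n I P \<and>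
     (\<forall>Q. povm n I Q \<longrightarrow> success I p \<rho> Q \<le> success I p \<rho> P)"

definition kron :: "complex mat \<Rightarrow> complex mat \<Rightarrow> complex mat" where
  "kron A B = mat (dim_row A * dim_row B) (dim_col A * dim_col B)
     (\<lambda>(i,j). A $$ (i div dim_row B, j div dim_col B) * B $$ (i mod dim_row B, j mod dim_col B))"

definition kron_list :: "complex mat list \<Rightarrow> complex mat" where
  "kron_list As = foldr kron As (1\<^sub>m 1)"

definition tuples :: "nat \<Rightarrow> (nat \<Rightarrow> nat) \<Rightarrow> nat list set" where
  "tuples N k = {t. length t = N \<and> (\<forall>m<N. t ! m < k m)}"

end

theory Submission
  imports Defs
begin

text \<open>
  A POVM \<open>P\<close> is optimal for the weighted states \<open>W\<^sub>i = p\<^sub>i \<rho>\<^sub>i\<close> exactly when there is a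
  positive \<open>G\<close> with \<open>G \<ge> W\<^sub>i\<close> for all \<open>i\<close> and \<open>tr G = \<Sum>\<^sub>i tr (P\<^sub>i W\<^sub>i)\<close>. Such a \<open>G\<close> bounds every
  POVM \<open>Q\<close>: \<open>\<Sum>\<^sub>i tr (Q\<^sub>i W\<^sub>i) \<le> \<Sum>\<^sub>i tr (Q\<^sub>i G) = tr G\<close>. Conversely, for an optimal \<open>P\<close> the
  Hermitian part of \<open>\<Sum>\<^sub>i P\<^sub>i W\<^sub>i\<close> is such a \<open>G\<close>: otherwise some vector \<open>x\<close> and index \<open>j\<close>
  give a POVM \<open>(1 - s xx\<^sup>*) P\<^sub>i (1 - s xx\<^sup>*) + \<delta>\<^sub>i\<^sub>j (2s - s\<^sup>2|x|\<^sup>2) xx\<^sup>*\<close> that does better for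
  small \<open>s > 0\<close>. Certificates tensorise, because \<open>G\<otimes>H - W\<otimes>V = (G - W)\<otimes>H + W\<otimes>(H - V)\<close>
  is positive and \<open>tr (G\<otimes>H) = tr G tr H\<close>; so the Kronecker product of the certificates
  of the factors certifies the product POVM.
\<close>

section \<open>Hermitian forms of entry functions\<close>

text \<open>An \<open>n \<times> n\<close> matrix is handled through its entry function, of which only the values
  below \<open>n\<close> matter.\<close>

definition qform :: "nat \<Rightarrow> (nat \<Rightarrow> nat \<Rightarrow> complex) \<Rightarrow> (nat \<Rightarrow> complex) \<Rightarrow> complex" where
  "qform n f x = (\<Sum>a<n. \<Sum>b<n. cnj (x a) * f a b * x b)"

definition sesq :: "nat \<Rightarrow> (nat \<Rightarrow> nat \<Rightarrow> complex) \<Rightarrow> (nat \<Rightarrow> complex) \<Rightarrow> (nat \<Rightarrow> complex) \<Rightarrow> complex" where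
  "sesq n f x y = (\<Sum>a<n. \<Sum>b<n. cnj (x a) * f a b * y b)"

definition herm_fun :: "nat \<Rightarrow> (nat \<Rightarrow> nat \<Rightarrow> complex) \<Rightarrow> bool" where
  "herm_fun n f \<longleftrightarrow> (\<forall>a<n. \<forall>b<n. f b a = cnj (f a b))"

definition gram_rep :: "nat \<Rightarrow> (nat \<Rightarrow> nat \<Rightarrow> complex) \<Rightarrow> bool" where
  "gram_rep n f \<longleftrightarrow> (\<exists>us::(nat \<Rightarrow> complex) list. \<forall>a<n. \<forall>b<n. f a b = (\<Sum>u\<leftarrow>us. u a * cnj (u b)))"

definition basis_fun :: "nat \<Rightarrow> nat \<Rightarrow> complex" where
  "basis_fun i a = (if a = i then 1 else 0)"

definition cinner :: "nat \<Rightarrow> (nat \<Rightarrow> complex) \<Rightarrow> (nat \<Rightarrow> complex) \<Rightarrow> complex" where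
  "cinner n u x = (\<Sum>b<n. cnj (u b) * x b)"

lemma qform_eq_sesq: "qform n f x = sesq n f x x"
  by (simp add: qform_def sesq_def)

lemma sesq_add_left: "sesq n f (\<lambda>a. u a + v a) w = sesq n f u w + sesq n f v w"
  by (simp add: sesq_def algebra_simps sum.distrib)

lemma sesq_add_right: "sesq n f w (\<lambda>a. u a + v a) = sesq n f w u + sesq n f w v"
  by (simp add: sesq_def algebra_simps sum.distrib)

lemma sesq_scale_left: "sesq n f (\<lambda>a. c * u a) w = cnj c * sesq n f u w"
  by (simp add: sesq_def sum_distrib_left algebra_simps)

lemma sesq_scale_right: "sesq n f w (\<lambda>a. c * u a) = c * sesq n f w u"
  by (simp add: sesq_def sum_distrib_left algebra_simps)

lemma sum_basis_fun: "j < n \<Longrightarrow> (\<Sum>b<n. g b * basis_fun j b) = g j"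
  by (simp add: basis_fun_def if_distrib cong: if_cong)

lemma sesq_basis_left: "i < n \<Longrightarrow> sesq n f (basis_fun i) y = (\<Sum>b<n. f i b * y b)"
proof -
  have "(\<Sum>b<n. cnj (basis_fun i a) * f a b * y b) = (if a = i then (\<Sum>b<n. f i b * y b) else 0)" for a
    by (simp add: basis_fun_def)
  then show "i < n \<Longrightarrow> ?thesis" by (simp add: sesq_def)
qed

lemma sesq_basis_right: "j < n \<Longrightarrow> sesq n f x (basis_fun j) = (\<Sum>a<n. cnj (x a) * f a j)"
  by (simp add: sesq_def sum_basis_fun)

lemma sesq_basis_basis: "i < n \<Longrightarrow> j < n \<Longrightarrow> sesq n f (basis_fun i) (basis_fun j) = f i j"
  by (simp add: sesq_basis_left sum_basis_fun)

lemma qform_basis: "i < n \<Longrightarrow> qform n f (basis_fun i) = f i i"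
  by (simp add: qform_eq_sesq sesq_basis_basis)

lemma qform_add: "qform n f (\<lambda>a. u a + v a) = qform n f u + sesq n f u v + sesq n f v u + qform n f v"
  by (simp add: qform_eq_sesq sesq_add_left sesq_add_right)

lemma qform_diff: "qform n (\<lambda>a b. f a b - h a b) x = qform n f x - qform n h x"
  unfolding qform_def by (simp add: right_diff_distrib left_diff_distrib sum_subtractf)

lemma qform_lin: "qform n (\<lambda>a b. F a b + t * H a b) z = qform n F z + t * qform n H z"
  unfolding qform_def by (simp add: algebra_simps sum.distrib sum_distrib_left)

lemma qform_sum: "finite I \<Longrightarrow> (\<Sum>i\<in>I. qform n (M i) x) = qform n (\<lambda>a b. \<Sum>i\<in>I. M i a b) x"
  unfolding qform_def by (simp add: sum_distrib_left sum_distrib_right sum.swap[of _ I])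

lemma qform_outer: "qform n (\<lambda>a b. u a * v b / c) x = (\<Sum>a<n. cnj (x a) * u a) * (\<Sum>b<n. v b * x b) / c"
proof -
  have "qform n (\<lambda>a b. u a * v b / c) x = (\<Sum>a<n. \<Sum>b<n. (cnj (x a) * u a) * (v b * x b) / c)"
    unfolding qform_def by (intro sum.cong refl) (simp add: mult_ac)
  also have "\<dots> = (\<Sum>a<n. (cnj (x a) * u a) * (\<Sum>b<n. v b * x b) / c)"
    by (simp add: sum_distrib_left sum_divide_distrib)
  also have "\<dots> = (\<Sum>a<n. cnj (x a) * u a) * (\<Sum>b<n. v b * x b) / c"
    by (simp add: sum_distrib_right sum_divide_distrib)
  finally show ?thesis .
qed

lemma qform_rank_one: "qform n (\<lambda>a b. u a * cnj (v b)) z = cnj (cinner n u z) * cinner n v z"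
proof -
  have "cnj (cinner n u z) = (\<Sum>a<n. cnj (z a) * u a)"
    unfolding cinner_def by (simp add: mult.commute)
  then show ?thesis unfolding qform_def cinner_def by (simp add: sum_product mult_ac)
qed

lemma qform_adjoint: "qform n (\<lambda>a b. cnj (f b a)) x = cnj (qform n f x)"
proof -
  have "cnj (qform n f x) = (\<Sum>a<n. \<Sum>b<n. x a * cnj (f a b) * cnj (x b))"
    unfolding qform_def by simp
  also have "\<dots> = (\<Sum>b<n. \<Sum>a<n. x a * cnj (f a b) * cnj (x b))"
    by (rule sum.swap)
  finally show ?thesis unfolding qform_def by (simp add: mult_ac)
qed

lemma qform_cong_vec: "(\<And>a. a < n \<Longrightarrow> x a = y a) \<Longrightarrow> qform n f x = qform n f y"
  unfolding qform_def by (intro sum.cong refl) auto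

lemma qform_cong: "(\<And>a b. a < n \<Longrightarrow> b < n \<Longrightarrow> f a b = g a b) \<Longrightarrow> qform n f x = qform n g x"
  unfolding qform_def by (intro sum.cong refl) auto

lemma herm_funD: "herm_fun n f \<Longrightarrow> a < n \<Longrightarrow> b < n \<Longrightarrow> f b a = cnj (f a b)"
  unfolding herm_fun_def by blast

lemma herm_fun_cong:
  assumes "herm_fun n f" and "\<And>a b. a < n \<Longrightarrow> b < n \<Longrightarrow> g a b = f a b"
  shows "herm_fun n g"
  unfolding herm_fun_def
proof (intro allI impI)
  fix a b assume "a < n" "b < n"
  then show "g b a = cnj (g a b)" using assms(2)[of a b] assms(2)[of b a] herm_funD[OF assms(1), of a b]
    by simp
qed

lemma herm_fun_diff:
  assumes "herm_fun n f" and "herm_fun n g"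
  shows "herm_fun n (\<lambda>a b. f a b - g a b)"
  unfolding herm_fun_def
proof (intro allI impI)
  fix a b assume "a < n" "b < n"
  then show "f b a - g b a = cnj (f a b - g a b)"
    using herm_funD[OF assms(1), of a b] herm_funD[OF assms(2), of a b] by simp
qed

lemma sesq_herm_fun:
  assumes "herm_fun n f"
  shows "sesq n f y x = cnj (sesq n f x y)"
proof -
  have "cnj (sesq n f x y) = (\<Sum>a<n. \<Sum>b<n. x a * f b a * cnj (y b))"
    unfolding sesq_def cnj_sum
  proof (intro sum.cong refl)
    fix a b assume "a \<in> {..<n}" "b \<in> {..<n}"
    then show "cnj (cnj (x a) * f a b * y b) = x a * f b a * cnj (y b)"
      using herm_funD[OF assms, of a b] by simp
  qed
  also have "\<dots> = sesq n f y x"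
    unfolding sesq_def by (subst (2) sum.swap) (simp add: mult_ac)
  finally show ?thesis by simp
qed

lemma qform_real: "herm_fun n f \<Longrightarrow> Im (qform n f x) = 0"
  using sesq_herm_fun[of n f x x] by (metis cnj.sel(2) neg_equal_zero qform_eq_sesq)

lemma psd_fun_zero_diag:
  assumes h: "herm_fun n f" and pos: "\<forall>x. 0 \<le> Re (qform n f x)" and i: "i < n" and j: "j < n"
    and z: "f i i = 0"
  shows "f i j = 0"
proof (rule ccontr)
  assume nz: "f i j \<noteq> 0"
  define z where "z = f i j"
  define nz2 where "nz2 = (Re z)\<^sup>2 + (Im z)\<^sup>2"
  have nz2: "nz2 > 0" using nz unfolding nz2_def z_def
    by (auto simp: sum_power2_gt_zero_iff complex_eq_iff)
  define t where "t = (Re (f j j) + 1) / (2 * nz2)"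
  define s where "s = - (complex_of_real t * z)"
  define x where "x = (\<lambda>a. s * basis_fun i a + basis_fun j a)"
  have fji: "f j i = cnj z" using herm_funD[OF h i j] z_def by simp
  have q: "qform n f x = cnj s * z + s * cnj z + f j j"
    unfolding x_def
    by (simp add: qform_add qform_eq_sesq sesq_scale_left sesq_scale_right sesq_basis_basis i j z
        fji flip: z_def)
  have "Re (qform n f x) = Re (f j j) - 2 * t * nz2"
    unfolding q s_def nz2_def by (simp add: power2_eq_square algebra_simps)
  also have "\<dots> = -1" unfolding t_def using nz2 by (simp add: field_simps)
  finally show False using pos by (metis neg_0_le_iff_le not_one_le_zero)
qed

lemma herm_fun_diag_real: "herm_fun n f \<Longrightarrow> i < n \<Longrightarrow> f i i = complex_of_real (Re (f i i))"
  using herm_funD[of n f i i] by (simp add: complex_eq_iff)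

text \<open>The form of the Schur complement of the entry \<open>(i, i)\<close> is the form of \<open>f\<close> at \<open>x\<close> shifted
  along the \<open>i\<close>-th basis vector; this is what keeps it positive.\<close>

lemma qform_schur_complement:
  assumes h: "herm_fun n f" and i: "i < n" and nz: "f i i \<noteq> 0"
  shows "qform n (\<lambda>a b. f a b - f a i * f i b / f i i) x
    = qform n f (\<lambda>a. x a - (\<Sum>b<n. f i b * x b) / f i i * basis_fun i a)"
proof -
  define \<beta> where "\<beta> = (\<Sum>b<n. f i b * x b)"
  define s where "s = - \<beta> / f i i"
  have c1: "(\<Sum>a<n. cnj (x a) * f a i) = cnj \<beta>"
  proof -
    have "(\<Sum>a<n. cnj (x a) * f a i) = (\<Sum>a<n. cnj (f i a * x a))"
      using herm_funD[OF h i] by (intro sum.cong refl) (simp add: mult.commute)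
    then show ?thesis unfolding \<beta>_def by (simp only: cnj_sum)
  qed
  have "qform n (\<lambda>a b. f a b - f a i * f i b / f i i) x
      = qform n f x - qform n (\<lambda>a b. f a i * f i b / f i i) x"
    by (rule qform_diff)
  also have "qform n (\<lambda>a b. f a i * f i b / f i i) x = cnj \<beta> * \<beta> / f i i"
    unfolding qform_outer c1 \<beta>_def ..
  finally have qg: "qform n (\<lambda>a b. f a b - f a i * f i b / f i i) x = qform n f x - cnj \<beta> * \<beta> / f i i" .
  have 1: "sesq n f x (\<lambda>a. s * basis_fun i a) = s * cnj \<beta>"
    by (simp only: sesq_scale_right sesq_basis_right[OF i] c1)
  have 2: "sesq n f (\<lambda>a. s * basis_fun i a) x = cnj s * \<beta>"
    by (simp only: sesq_scale_left sesq_basis_left[OF i] \<beta>_def)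
  have 3: "qform n f (\<lambda>a. s * basis_fun i a) = cnj s * (s * f i i)"
    by (simp only: qform_eq_sesq sesq_scale_left sesq_scale_right sesq_basis_basis[OF i i])
  have "qform n f (\<lambda>a. x a + s * basis_fun i a) = qform n f x + s * cnj \<beta> + cnj s * \<beta> + cnj s * (s * f i i)"
    unfolding qform_add 1 2 3 ..
  also have "\<dots> = qform n f x - cnj \<beta> * \<beta> / f i i"
    using nz herm_fun_diag_real[OF h i] unfolding s_def
    by (simp add: field_simps)
  finally have "qform n (\<lambda>a b. f a b - f a i * f i b / f i i) x = qform n f (\<lambda>a. x a + s * basis_fun i a)"
    using qg by simp
  moreover have "(\<lambda>a. x a + s * basis_fun i a) = (\<lambda>a. x a - \<beta> / f i i * basis_fun i a)"
    unfolding s_def by auto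
  ultimately show ?thesis unfolding \<beta>_def by simp
qed

text \<open>One step of a Cholesky factorisation; the last conclusion splits off the rank-one part.\<close>

lemma psd_fun_peel:
  assumes h: "herm_fun n f" and pos: "\<forall>x. 0 \<le> Re (qform n f x)" and i: "i < n"
    and nz: "f i i \<noteq> 0"
    and g_def: "g = (\<lambda>a b. f a b - f a i * f i b / f i i)"
  shows "herm_fun n g" "\<forall>x. 0 \<le> Re (qform n g x)" "g i i = 0"
    "\<And>j. j < n \<Longrightarrow> f j j = 0 \<Longrightarrow> g j j = 0"
    "\<exists>v. \<forall>a<n. \<forall>b<n. f a b = v a * cnj (v b) + g a b"
proof -
  define r where "r = Re (f i i)"
  have fiireal: "f i i = complex_of_real r"
    unfolding r_def by (rule herm_fun_diag_real[OF h i])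
  have r0: "r \<ge> 0" using pos[rule_format, of "basis_fun i"] qform_basis[OF i, of f] r_def by simp
  show "herm_fun n g" unfolding herm_fun_def g_def
  proof (intro allI impI)
    fix a b assume a: "a < n" and b: "b < n"
    have e1: "f b a = cnj (f a b)" "f i a = cnj (f a i)" "f b i = cnj (f i b)"
      using herm_funD[OF h a b] herm_funD[OF h a i] herm_funD[OF h i b] by auto
    show "f b a - f b i * f i a / f i i = cnj (f a b - f a i * f i b / f i i)"
      by (simp only: e1) (simp add: fiireal mult.commute)
  qed
  show "\<forall>x. 0 \<le> Re (qform n g x)"
    using pos unfolding g_def qform_schur_complement[OF h i nz] by blast
  show "g i i = 0" unfolding g_def using nz by simp
  show "g j j = 0" if "j < n" and "f j j = 0" for j
    using psd_fun_zero_diag[OF h pos that(1) i that(2)] that(2) unfolding g_def by simp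
  show "\<exists>v. \<forall>a<n. \<forall>b<n. f a b = v a * cnj (v b) + g a b"
  proof (intro exI allI impI)
    fix a b assume a: "a < n" and b: "b < n"
    have sq: "complex_of_real (sqrt r) * complex_of_real (sqrt r) = complex_of_real r"
      using r0 by (simp flip: of_real_mult)
    have "f a i / complex_of_real (sqrt r) * cnj (f b i / complex_of_real (sqrt r))
        = f a i * f i b / (complex_of_real (sqrt r) * complex_of_real (sqrt r))"
      using herm_funD[OF h i b] by simp
    also have "\<dots> = f a i * f i b / f i i" using sq fiireal by simp
    finally show "f a b = f a i / complex_of_real (sqrt r) * cnj (f b i / complex_of_real (sqrt r)) + g a b"
      unfolding g_def by simp
  qed
qed

lemma gram_rep_if_psd_fun:
  assumes "herm_fun n f" and "\<forall>x. 0 \<le> Re (qform n f x)"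
  shows "gram_rep n f"
  using assms
proof (induction "card {j. j < n \<and> f j j \<noteq> 0}" arbitrary: f rule: less_induct)
  case less
  show ?case
  proof (cases "\<exists>i<n. f i i \<noteq> 0")
    case False
    then have "\<forall>a<n. \<forall>b<n. f a b = 0" using psd_fun_zero_diag[OF less.prems] by blast
    then show ?thesis unfolding gram_rep_def by (intro exI[of _ "[]"]) simp
  next
    case True
    then obtain i where i: "i < n" and nz: "f i i \<noteq> 0" by blast
    define g where "g = (\<lambda>a b. f a b - f a i * f i b / f i i)"
    note peel = psd_fun_peel[OF less.prems i nz g_def]
    have "{j. j < n \<and> g j j \<noteq> 0} \<subset> {j. j < n \<and> f j j \<noteq> 0}"
      using peel(3,4) i nz by blast
    then have "card {j. j < n \<and> g j j \<noteq> 0} < card {j. j < n \<and> f j j \<noteq> 0}"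
      by (rule psubset_card_mono[rotated]) simp
    then obtain us where us: "\<forall>a<n. \<forall>b<n. g a b = (\<Sum>u\<leftarrow>us. u a * cnj (u b))"
      using less.hyps peel(1,2) unfolding gram_rep_def by blast
    obtain v where "\<forall>a<n. \<forall>b<n. f a b = v a * cnj (v b) + g a b" using peel(5) by blast
    then show ?thesis unfolding gram_rep_def using us by (intro exI[of _ "v # us"]) simp
  qed
qed

lemma sum_list_swap: "(\<Sum>a\<in>A. \<Sum>u\<leftarrow>us. F a u) = (\<Sum>u\<leftarrow>us. \<Sum>a\<in>A. F a u)"
  by (induct us) (auto simp: sum.distrib)

lemma cnj_sum_list: "cnj (\<Sum>u\<leftarrow>us. F u) = (\<Sum>u\<leftarrow>us. cnj (F u))"
  by (induct us) auto

lemma Re_sum_list_nonneg: "(\<And>u. 0 \<le> Re (F u)) \<Longrightarrow> 0 \<le> Re (\<Sum>u\<leftarrow>us. F u)"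
  by (induct us) (auto intro: add_nonneg_nonneg)

lemma Im_sum_list_zero: "(\<And>u. Im (F u) = 0) \<Longrightarrow> Im (\<Sum>u\<leftarrow>us. F u) = 0"
  by (induct us) auto

lemma cnj_mult_self: "0 \<le> Re (cnj z * z)" "Im (cnj z * z) = 0"
  by (auto simp: algebra_simps)

lemma qform_gram:
  assumes rep: "\<forall>a<n. \<forall>b<n. f a b = (\<Sum>u\<leftarrow>us. u a * cnj (u b))"
  shows "qform n f x = (\<Sum>u\<leftarrow>us. cnj (cinner n u x) * cinner n u x)"
proof -
  have "qform n f x = (\<Sum>a<n. \<Sum>b<n. \<Sum>u\<leftarrow>us. (cnj (x a) * u a) * (cnj (u b) * x b))"
    unfolding qform_def
  proof (intro sum.cong refl)
    fix a b assume "a \<in> {..<n}" "b \<in> {..<n}"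
    then show "cnj (x a) * f a b * x b = (\<Sum>u\<leftarrow>us. (cnj (x a) * u a) * (cnj (u b) * x b))"
      using rep by (simp add: sum_list_const_mult[symmetric] sum_list_mult_const[symmetric] mult_ac)
  qed
  also have "\<dots> = (\<Sum>u\<leftarrow>us. \<Sum>a<n. \<Sum>b<n. (cnj (x a) * u a) * (cnj (u b) * x b))"
    by (simp add: sum_list_swap)
  also have "\<dots> = (\<Sum>u\<leftarrow>us. qform n (\<lambda>a b. u a * cnj (u b)) x)"
    unfolding qform_def by (simp add: mult_ac)
  also have "\<dots> = (\<Sum>u\<leftarrow>us. cnj (cinner n u x) * cinner n u x)"
    by (simp add: qform_rank_one)
  finally show ?thesis .
qed

lemma gram_rep_herm_fun: "gram_rep n f \<Longrightarrow> herm_fun n f"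
  unfolding gram_rep_def herm_fun_def by (auto simp: cnj_sum_list mult.commute)

lemma gram_rep_qform:
  assumes "gram_rep n f"
  shows "0 \<le> Re (qform n f x)" "Im (qform n f x) = 0"
proof -
  obtain us where rep: "\<forall>a<n. \<forall>b<n. f a b = (\<Sum>u\<leftarrow>us. u a * cnj (u b))"
    using assms unfolding gram_rep_def by blast
  show "0 \<le> Re (qform n f x)" "Im (qform n f x) = 0"
    unfolding qform_gram[OF rep] by (intro Re_sum_list_nonneg Im_sum_list_zero cnj_mult_self)+
qed

lemma gram_rep_cong:
  "gram_rep n f \<Longrightarrow> (\<And>a b. a < n \<Longrightarrow> b < n \<Longrightarrow> g a b = f a b) \<Longrightarrow> gram_rep n g"
  unfolding gram_rep_def by metis

lemma gram_rep_add:
  assumes "gram_rep n f" and "gram_rep n g"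
  shows "gram_rep n (\<lambda>a b. f a b + g a b)"
proof -
  obtain us where us: "\<forall>a<n. \<forall>b<n. f a b = (\<Sum>u\<leftarrow>us. u a * cnj (u b))"
    using assms unfolding gram_rep_def by blast
  obtain ws where ws: "\<forall>a<n. \<forall>b<n. g a b = (\<Sum>u\<leftarrow>ws. u a * cnj (u b))"
    using assms unfolding gram_rep_def by blast
  show ?thesis unfolding gram_rep_def by (intro exI[of _ "us @ ws"]) (simp add: us ws)
qed

lemma gram_rep_scale:
  assumes "gram_rep n f" and "0 \<le> c"
  shows "gram_rep n (\<lambda>a b. complex_of_real c * f a b)"
proof -
  obtain us where us: "\<forall>a<n. \<forall>b<n. f a b = (\<Sum>u\<leftarrow>us. u a * cnj (u b))"
    using assms unfolding gram_rep_def by blast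
  let ?r = "complex_of_real (sqrt c)"
  have sq: "?r * ?r = complex_of_real c"
    using assms(2) by (simp flip: of_real_mult)
  show ?thesis unfolding gram_rep_def
  proof (intro exI[of _ "map (\<lambda>u a. ?r * u a) us"] allI impI)
    fix a b assume "a < n" "b < n"
    then have "complex_of_real c * f a b = (\<Sum>u\<leftarrow>us. (?r * ?r) * (u a * cnj (u b)))"
      using us sq by (simp add: sum_list_const_mult)
    also have "\<dots> = (\<Sum>u\<leftarrow>map (\<lambda>u a. ?r * u a) us. u a * cnj (u b))"
      by (simp add: comp_def mult_ac)
    finally show "complex_of_real c * f a b = (\<Sum>u\<leftarrow>map (\<lambda>u a. ?r * u a) us. u a * cnj (u b))" .
  qed
qed

definition trace_prod :: "nat \<Rightarrow> (nat \<Rightarrow> nat \<Rightarrow> complex) \<Rightarrow> (nat \<Rightarrow> nat \<Rightarrow> complex) \<Rightarrow> complex" where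
  "trace_prod n F X = (\<Sum>a<n. \<Sum>b<n. F a b * X b a)"

lemma trace_prod_lin: "trace_prod n (\<lambda>a b. F a b + t * H a b) X = trace_prod n F X + t * trace_prod n H X"
  unfolding trace_prod_def by (simp add: algebra_simps sum.distrib sum_distrib_left)

lemma trace_prod_rank_one: "trace_prod n (\<lambda>a b. u a * cnj (v b)) X = sesq n X v u"
  unfolding trace_prod_def sesq_def by (subst sum.swap) (simp add: mult_ac)

lemma trace_prod_sum_left: "(\<Sum>i\<in>I. trace_prod n (F i) X) = trace_prod n (\<lambda>a b. \<Sum>i\<in>I. F i a b) X"
  unfolding trace_prod_def by (simp add: sum_distrib_right sum.swap[of _ I])

lemma trace_prod_diff_right: "trace_prod n F (\<lambda>a b. X a b - Y a b) = trace_prod n F X - trace_prod n F Y"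
  unfolding trace_prod_def by (simp add: right_diff_distrib sum_subtractf)

lemma trace_prod_cong:
  "(\<And>a b. a < n \<Longrightarrow> b < n \<Longrightarrow> f a b = g a b) \<Longrightarrow> (\<And>a b. a < n \<Longrightarrow> b < n \<Longrightarrow> X a b = Y a b)
   \<Longrightarrow> trace_prod n f X = trace_prod n g Y"
  unfolding trace_prod_def by (intro sum.cong refl) auto

lemma trace_prod_gram:
  assumes rep: "\<forall>a<n. \<forall>b<n. f a b = (\<Sum>u\<leftarrow>us. u a * cnj (u b))"
  shows "trace_prod n f X = (\<Sum>u\<leftarrow>us. qform n X u)"
proof -
  have "trace_prod n f X = (\<Sum>a<n. \<Sum>b<n. \<Sum>u\<leftarrow>us. cnj (u b) * X b a * u a)"
    unfolding trace_prod_def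
  proof (intro sum.cong refl)
    fix a b assume "a \<in> {..<n}" "b \<in> {..<n}"
    then show "f a b * X b a = (\<Sum>u\<leftarrow>us. cnj (u b) * X b a * u a)"
      using rep by (simp add: sum_list_const_mult[symmetric] mult_ac)
  qed
  also have "\<dots> = (\<Sum>u\<leftarrow>us. \<Sum>a<n. \<Sum>b<n. cnj (u b) * X b a * u a)"
    by (simp add: sum_list_swap)
  also have "\<dots> = (\<Sum>u\<leftarrow>us. qform n X u)"
    unfolding qform_def by (subst sum.swap) (rule refl)
  finally show ?thesis .
qed

lemma trace_prod_gram_rep:
  assumes "gram_rep n f" and "gram_rep n X"
  shows "0 \<le> Re (trace_prod n f X)" "Im (trace_prod n f X) = 0"
proof -
  obtain us where rep: "\<forall>a<n. \<forall>b<n. f a b = (\<Sum>u\<leftarrow>us. u a * cnj (u b))"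
    using assms unfolding gram_rep_def by blast
  show "0 \<le> Re (trace_prod n f X)" "Im (trace_prod n f X) = 0"
    unfolding trace_prod_gram[OF rep]
    by (intro Re_sum_list_nonneg Im_sum_list_zero gram_rep_qform[OF assms(2)])+
qed

section \<open>Positive semidefinite matrices\<close>

definition entries :: "complex mat \<Rightarrow> nat \<Rightarrow> nat \<Rightarrow> complex" where
  "entries A a b = A $$ (a, b)"

lemma mat_adjoint_index:
  "i < dim_col A \<Longrightarrow> j < dim_row A \<Longrightarrow> mat_adjoint A $$ (i, j) = conjugate (A $$ (j, i))"
  unfolding mat_adjoint_def by (simp add: mat_of_rows_def)

lemma mat_adjoint_dims: "dim_row (mat_adjoint A) = dim_col A" "dim_col (mat_adjoint A) = dim_row A"
  unfolding mat_adjoint_def by (simp_all add: mat_of_rows_def)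

lemma mat_adjoint_eq_iff_herm_fun:
  assumes A: "A \<in> carrier_mat n n"
  shows "mat_adjoint A = A \<longleftrightarrow> herm_fun n (entries A)"
proof
  assume h: "mat_adjoint A = A"
  show "herm_fun n (entries A)" unfolding herm_fun_def entries_def
  proof (intro allI impI)
    fix a b assume "a < n" "b < n"
    then show "A $$ (b, a) = cnj (A $$ (a, b))"
      using h mat_adjoint_index[of b A a] A by auto
  qed
next
  assume h: "herm_fun n (entries A)"
  show "mat_adjoint A = A"
  proof (rule eq_matI)
    fix i j assume "i < dim_row A" "j < dim_col A"
    then show "mat_adjoint A $$ (i, j) = A $$ (i, j)"
      using mat_adjoint_index[of i A j] herm_funD[OF h, of j i] A unfolding entries_def by auto
  qed (use A in \<open>auto simp: mat_adjoint_dims\<close>)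
qed

lemma cscalar_prod_mult_mat_vec:
  assumes A: "A \<in> carrier_mat n n" and v: "v \<in> carrier_vec n"
  shows "(A *\<^sub>v v) \<bullet>c v = qform n (entries A) (\<lambda>a. v $ a)"
proof -
  have "(A *\<^sub>v v) \<bullet>c v = (\<Sum>a<n. (\<Sum>b<n. A $$ (a, b) * v $ b) * cnj (v $ a))"
    using A v by (simp add: scalar_prod_def mult_mat_vec_def atLeast0LessThan row_def)
  also have "\<dots> = qform n (entries A) (\<lambda>a. v $ a)"
    unfolding qform_def entries_def by (simp add: sum_distrib_right sum_distrib_left mult_ac)
  finally show ?thesis .
qed

lemma psd_iff_herm_fun:
  "psd n A \<longleftrightarrow> A \<in> carrier_mat n n \<and> herm_fun n (entries A) \<and> (\<forall>x. 0 \<le> Re (qform n (entries A) x))"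
proof
  assume "psd n A"
  then have A: "A \<in> carrier_mat n n" and adj: "mat_adjoint A = A"
    and pos: "\<forall>v \<in> carrier_vec n. Re ((A *\<^sub>v v) \<bullet>c v) \<ge> 0"
    unfolding psd_def by auto
  have "0 \<le> Re (qform n (entries A) x)" for x
  proof -
    have "qform n (entries A) x = qform n (entries A) (\<lambda>a. vec n x $ a)"
      by (rule qform_cong_vec) simp
    also have "\<dots> = (A *\<^sub>v vec n x) \<bullet>c vec n x"
      using cscalar_prod_mult_mat_vec[OF A, of "vec n x"] by simp
    finally show ?thesis using pos by auto
  qed
  then show "A \<in> carrier_mat n n \<and> herm_fun n (entries A) \<and> (\<forall>x. 0 \<le> Re (qform n (entries A) x))"
    using A adj mat_adjoint_eq_iff_herm_fun[OF A] by auto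
next
  assume h: "A \<in> carrier_mat n n \<and> herm_fun n (entries A) \<and> (\<forall>x. 0 \<le> Re (qform n (entries A) x))"
  then have A: "A \<in> carrier_mat n n" by auto
  show "psd n A" unfolding psd_def
    using h mat_adjoint_eq_iff_herm_fun[OF A] cscalar_prod_mult_mat_vec[OF A] qform_real[of n "entries A"]
    by auto
qed

lemma psd_iff_gram_rep: "psd n A \<longleftrightarrow> A \<in> carrier_mat n n \<and> gram_rep n (entries A)"
  unfolding psd_iff_herm_fun using gram_rep_if_psd_fun gram_rep_herm_fun gram_rep_qform by blast

lemma psd_carrier: "psd n A \<Longrightarrow> A \<in> carrier_mat n n"
  unfolding psd_def by blast

lemma mtrace_mult:
  assumes "A \<in> carrier_mat n n" and "B \<in> carrier_mat n n"
  shows "mtrace (A * B) = trace_prod n (entries A) (entries B)"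
  using assms unfolding mtrace_def trace_prod_def entries_def
  by (auto intro!: sum.cong simp: scalar_prod_def atLeast0LessThan row_def col_def)

lemma mtrace_mult_smult:
  assumes "A \<in> carrier_mat n n" and "B \<in> carrier_mat n n"
  shows "mtrace (A * (c \<cdot>\<^sub>m B)) = c * mtrace (A * B)"
  using assms unfolding mult_smult_distrib[OF assms] mtrace_def by (simp add: sum_distrib_left)

lemma psd_mtrace_real:
  assumes "psd n A"
  shows "Im (mtrace A) = 0"
proof -
  have h: "herm_fun n (entries A)" using assms unfolding psd_iff_herm_fun by blast
  have "Im (A $$ (a, a)) = 0" if "a < n" for a
  proof -
    have "A $$ (a, a) = cnj (A $$ (a, a))" using herm_funD[OF h that that] unfolding entries_def .
    then show ?thesis by (simp add: complex_eq_iff)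
  qed
  then show ?thesis using psd_carrier[OF assms] unfolding mtrace_def by (simp add: Im_sum)
qed

lemma mtrace_mult_psd_real:
  assumes "psd n A" and "psd n B"
  shows "Im (mtrace (A * B)) = 0"
proof -
  have A: "A \<in> carrier_mat n n" "gram_rep n (entries A)"
    and B: "B \<in> carrier_mat n n" "gram_rep n (entries B)"
    using assms unfolding psd_iff_gram_rep by auto
  show ?thesis unfolding mtrace_mult[OF A(1) B(1)] by (rule trace_prod_gram_rep(2)[OF A(2) B(2)])
qed

lemma povm_psd: "povm n I Q \<Longrightarrow> i \<in> I \<Longrightarrow> psd n (Q i)"
  by (simp add: povm_def)

lemma povm_carrier: "povm n I Q \<Longrightarrow> i \<in> I \<Longrightarrow> Q i \<in> carrier_mat n n"
  by (rule psd_carrier[OF povm_psd])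

lemma povm_sum_entries:
  assumes "povm n I Q" and "a < n" and "b < n"
  shows "(\<Sum>i\<in>I. Q i $$ (a, b)) = (if a = b then 1 else 0)"
proof -
  have "(\<Sum>i\<in>I. Q i $$ (a, b)) = msum n Q I $$ (a, b)"
    unfolding msum_def using assms(2,3) by simp
  also have "\<dots> = 1\<^sub>m n $$ (a, b)"
    using assms(1) unfolding povm_def by simp
  finally show ?thesis using assms(2,3) by simp
qed

section \<open>Kronecker products\<close>

lemma sum_lessThan_add:
  fixes g :: "nat \<Rightarrow> 'a::comm_monoid_add"
  shows "(\<Sum>i<m + k. g i) = (\<Sum>i<m. g i) + (\<Sum>b<k. g (m + b))"
  by (induct k) (auto simp: add.assoc)

lemma sum_lessThan_mult_div_mod:
  fixes f :: "nat \<Rightarrow> nat \<Rightarrow> 'a::comm_monoid_add"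
  shows "(\<Sum>i<n1 * n2. f (i div n2) (i mod n2)) = (\<Sum>a<n1. \<Sum>b<n2. f a b)"
proof (induct n1)
  case (Suc n1)
  have "(\<Sum>i<Suc n1 * n2. f (i div n2) (i mod n2)) = (\<Sum>i<n1 * n2 + n2. f (i div n2) (i mod n2))"
    by (simp add: add.commute)
  also have "\<dots> = (\<Sum>i<n1 * n2. f (i div n2) (i mod n2))
      + (\<Sum>b<n2. f ((n1 * n2 + b) div n2) ((n1 * n2 + b) mod n2))"
    by (rule sum_lessThan_add)
  also have "(\<Sum>b<n2. f ((n1 * n2 + b) div n2) ((n1 * n2 + b) mod n2)) = (\<Sum>b<n2. f n1 b)"
    by (intro sum.cong refl) auto
  finally show ?case using Suc by simp
qed simp

lemma div_mod_less:
  fixes a n1 n2 :: nat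
  assumes "a < n1 * n2"
  shows "a div n2 < n1" "a mod n2 < n2"
proof -
  show "a div n2 < n1" using assms by (rule less_mult_imp_div_less)
  have "n2 > 0" using assms by (cases n2) auto
  then show "a mod n2 < n2" by simp
qed

lemma kron_carrier:
  "A \<in> carrier_mat n1 n1 \<Longrightarrow> B \<in> carrier_mat n2 n2 \<Longrightarrow> kron A B \<in> carrier_mat (n1 * n2) (n1 * n2)"
  unfolding kron_def by auto

lemma kron_entries:
  assumes "A \<in> carrier_mat n1 n1" and "B \<in> carrier_mat n2 n2" and "a < n1 * n2" and "b < n1 * n2"
  shows "entries (kron A B) a b = entries A (a div n2) (b div n2) * entries B (a mod n2) (b mod n2)"
  using assms unfolding kron_def entries_def by auto

lemma sum_list_concat_map:
  "(\<Sum>v\<leftarrow>concat (map (\<lambda>u. map (h u) ws) us). F v) = (\<Sum>u\<leftarrow>us. \<Sum>w\<leftarrow>ws. F (h u w))"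
  by (induct us) (auto simp: comp_def)

lemma gram_rep_kron:
  assumes "gram_rep n1 f" and "gram_rep n2 g"
  shows "gram_rep (n1 * n2) (\<lambda>a b. f (a div n2) (b div n2) * g (a mod n2) (b mod n2))"
proof -
  obtain us where us: "\<forall>a<n1. \<forall>b<n1. f a b = (\<Sum>u\<leftarrow>us. u a * cnj (u b))"
    using assms unfolding gram_rep_def by blast
  obtain ws where ws: "\<forall>a<n2. \<forall>b<n2. g a b = (\<Sum>u\<leftarrow>ws. u a * cnj (u b))"
    using assms unfolding gram_rep_def by blast
  let ?h = "\<lambda>u w i. u (i div n2) * w (i mod n2)"
  show ?thesis unfolding gram_rep_def
  proof (intro exI[of _ "concat (map (\<lambda>u. map (?h u) ws) us)"] allI impI)
    fix a b assume a: "a < n1 * n2" and b: "b < n1 * n2"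
    have "f (a div n2) (b div n2) * g (a mod n2) (b mod n2)
       = (\<Sum>u\<leftarrow>us. u (a div n2) * cnj (u (b div n2))) * (\<Sum>w\<leftarrow>ws. w (a mod n2) * cnj (w (b mod n2)))"
      using us ws div_mod_less[OF a] div_mod_less[OF b] by simp
    also have "\<dots> = (\<Sum>u\<leftarrow>us. \<Sum>w\<leftarrow>ws. ?h u w a * cnj (?h u w b))"
      by (subst sum_list_mult_const[symmetric]) (simp add: sum_list_const_mult[symmetric] mult_ac)
    finally show "f (a div n2) (b div n2) * g (a mod n2) (b mod n2) =
      (\<Sum>v\<leftarrow>concat (map (\<lambda>u. map (?h u) ws) us). v a * cnj (v b))"
      by (simp only: sum_list_concat_map)
  qed
qed

lemma psd_kron:
  assumes "psd n1 A" and "psd n2 B"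
  shows "psd (n1 * n2) (kron A B)"
proof -
  have A: "A \<in> carrier_mat n1 n1" and B: "B \<in> carrier_mat n2 n2"
    using assms by (auto intro: psd_carrier)
  show ?thesis unfolding psd_iff_gram_rep
    using kron_carrier[OF A B] gram_rep_cong[OF gram_rep_kron[of n1 "entries A" n2 "entries B"]]
      kron_entries[OF A B] assms psd_iff_gram_rep by auto
qed

lemma psd_kron_diff:
  assumes G: "G \<in> carrier_mat n1 n1" and V: "V \<in> carrier_mat n2 n2"
    and H: "psd n2 H" and W: "psd n1 W" and GW: "psd n1 (G - W)" and HV: "psd n2 (H - V)"
  shows "psd (n1 * n2) (kron G H - kron W V)"
proof -
  have Hc: "H \<in> carrier_mat n2 n2" and Wc: "W \<in> carrier_mat n1 n1"
    using H W by (auto intro: psd_carrier)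
  have g1: "gram_rep (n1 * n2) (\<lambda>a b. entries (G - W) (a div n2) (b div n2) * entries H (a mod n2) (b mod n2))"
    using gram_rep_kron GW H unfolding psd_iff_gram_rep by blast
  have g2: "gram_rep (n1 * n2) (\<lambda>a b. entries W (a div n2) (b div n2) * entries (H - V) (a mod n2) (b mod n2))"
    using gram_rep_kron W HV unfolding psd_iff_gram_rep by blast
  have "gram_rep (n1 * n2) (entries (kron G H - kron W V))"
  proof (rule gram_rep_cong[OF gram_rep_add[OF g1 g2]])
    fix a b assume a: "a < n1 * n2" and b: "b < n1 * n2"
    have "entries (kron G H - kron W V) a b = entries (kron G H) a b - entries (kron W V) a b"
      using kron_carrier[OF Wc V] a b unfolding entries_def by simp
    also have "\<dots> = entries G (a div n2) (b div n2) * entries H (a mod n2) (b mod n2)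
       - entries W (a div n2) (b div n2) * entries V (a mod n2) (b mod n2)"
      using kron_entries[OF G Hc a b] kron_entries[OF Wc V a b] by simp
    also have "\<dots> = entries (G - W) (a div n2) (b div n2) * entries H (a mod n2) (b mod n2)
       + entries W (a div n2) (b div n2) * entries (H - V) (a mod n2) (b mod n2)"
      using div_mod_less[OF a] div_mod_less[OF b] Wc V unfolding entries_def by (simp add: algebra_simps)
    finally show "entries (kron G H - kron W V) a b
      = entries (G - W) (a div n2) (b div n2) * entries H (a mod n2) (b mod n2)
      + entries W (a div n2) (b div n2) * entries (H - V) (a mod n2) (b mod n2)" .
  qed
  moreover have "kron G H - kron W V \<in> carrier_mat (n1 * n2) (n1 * n2)"
    using kron_carrier[OF G Hc] kron_carrier[OF Wc V] by auto
  ultimately show ?thesis unfolding psd_iff_gram_rep by simp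
qed

lemma mtrace_kron:
  assumes A: "A \<in> carrier_mat n1 n1" and B: "B \<in> carrier_mat n2 n2"
  shows "mtrace (kron A B) = mtrace A * mtrace B"
proof -
  have "mtrace (kron A B) = (\<Sum>i<n1 * n2. entries A (i div n2) (i div n2) * entries B (i mod n2) (i mod n2))"
    unfolding mtrace_def using kron_carrier[OF A B] kron_entries[OF A B]
    by (intro sum.cong) (auto simp: entries_def)
  also have "\<dots> = (\<Sum>a<n1. \<Sum>b<n2. entries A a a * entries B b b)"
    by (rule sum_lessThan_mult_div_mod)
  also have "\<dots> = mtrace A * mtrace B"
    using A B unfolding mtrace_def entries_def by (simp add: sum_product)
  finally show ?thesis .
qed

lemma kron_mult:
  assumes A: "A \<in> carrier_mat n1 n1" and B: "B \<in> carrier_mat n2 n2"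
    and C: "C \<in> carrier_mat n1 n1" and D: "D \<in> carrier_mat n2 n2"
  shows "kron A B * kron C D = kron (A * C) (B * D)"
proof (rule eq_matI)
  fix i j assume "i < dim_row (kron (A * C) (B * D))" "j < dim_col (kron (A * C) (B * D))"
  then have i: "i < n1 * n2" and j: "j < n1 * n2" using A B C D unfolding kron_def by auto
  have "(kron A B * kron C D) $$ (i, j)
      = (\<Sum>k<n1 * n2. (A $$ (i div n2, k div n2) * B $$ (i mod n2, k mod n2))
                      * (C $$ (k div n2, j div n2) * D $$ (k mod n2, j mod n2)))"
    using i j A B C D kron_carrier[OF A B] kron_carrier[OF C D]
    by (auto simp: scalar_prod_def atLeast0LessThan kron_def intro!: sum.cong)
  also have "\<dots> = (\<Sum>a<n1. \<Sum>b<n2. (A $$ (i div n2, a) * C $$ (a, j div n2))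
                                      * (B $$ (i mod n2, b) * D $$ (b, j mod n2)))"
    by (subst sum_lessThan_mult_div_mod) (simp add: mult_ac)
  also have "\<dots> = (A * C) $$ (i div n2, j div n2) * (B * D) $$ (i mod n2, j mod n2)"
    using div_mod_less[OF i] div_mod_less[OF j] A B C D
    by (simp add: scalar_prod_def atLeast0LessThan sum_product)
  also have "\<dots> = kron (A * C) (B * D) $$ (i, j)"
    using i j A B C D unfolding kron_def by auto
  finally show "(kron A B * kron C D) $$ (i, j) = kron (A * C) (B * D) $$ (i, j)" .
qed (use A B C D in \<open>auto simp: kron_def\<close>)

lemma kron_one: "kron (1\<^sub>m n1) (1\<^sub>m n2) = 1\<^sub>m (n1 * n2)"
proof (rule eq_matI)
  fix i j assume "i < dim_row (1\<^sub>m (n1 * n2))" "j < dim_col (1\<^sub>m (n1 * n2))"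
  then have i: "i < n1 * n2" and j: "j < n1 * n2" by auto
  have "i = j \<longleftrightarrow> i div n2 = j div n2 \<and> i mod n2 = j mod n2"
    by (metis div_mult_mod_eq)
  then show "kron (1\<^sub>m n1) (1\<^sub>m n2) $$ (i, j) = 1\<^sub>m (n1 * n2) $$ (i, j)"
    using i j div_mod_less[OF i] div_mod_less[OF j] unfolding kron_def by auto
qed (auto simp: kron_def)

lemma kron_smult: "kron (c \<cdot>\<^sub>m A) (e \<cdot>\<^sub>m B) = (c * e) \<cdot>\<^sub>m kron A B"
proof (rule eq_matI)
  fix i j assume "i < dim_row ((c * e) \<cdot>\<^sub>m kron A B)" "j < dim_col ((c * e) \<cdot>\<^sub>m kron A B)"
  then have i: "i < dim_row A * dim_row B" and j: "j < dim_col A * dim_col B"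
    unfolding kron_def by auto
  then show "kron (c \<cdot>\<^sub>m A) (e \<cdot>\<^sub>m B) $$ (i, j) = ((c * e) \<cdot>\<^sub>m kron A B) $$ (i, j)"
    using div_mod_less[OF i] div_mod_less[OF j] unfolding kron_def by simp
qed (auto simp: kron_def)

lemma kron_list_smult:
  "kron_list (map (\<lambda>m. c m \<cdot>\<^sub>m A m) xs) = prod_list (map c xs) \<cdot>\<^sub>m kron_list (map A xs)"
proof (induct xs)
  case Nil
  have "(1::complex) \<cdot>\<^sub>m 1\<^sub>m 1 = 1\<^sub>m 1" by (rule eq_matI) auto
  then show ?case unfolding kron_list_def by simp
next
  case (Cons x xs)
  then show ?case unfolding kron_list_def by (simp add: kron_smult)
qed

lemma kron_list_upt_Suc:
  "kron_list (map f [0..<Suc N]) = kron (f 0) (kron_list (map (\<lambda>m. f (Suc m)) [0..<N]))"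
  unfolding kron_list_def map_upt_Suc by simp

section \<open>Dual certificates of optimality\<close>

text \<open>\<open>W i\<close> plays the role of the weighted state \<open>p\<^sub>i \<rho>\<^sub>i\<close>, and \<open>G\<close> is a feasible point of the
  dual semidefinite program whose value equals the success probability of \<open>P\<close>.\<close>

definition dual_cert ::
  "nat \<Rightarrow> 'i set \<Rightarrow> ('i \<Rightarrow> complex mat) \<Rightarrow> ('i \<Rightarrow> complex mat) \<Rightarrow> complex mat \<Rightarrow> bool" where
  "dual_cert n I W P G \<longleftrightarrow> povm n I P \<and> psd n G \<and> (\<forall>i\<in>I. psd n (W i) \<and> psd n (G - W i))
     \<and> Re (mtrace G) = (\<Sum>i\<in>I. Re (mtrace (P i * W i)))"

lemma trace_prod_one: "trace_prod n (\<lambda>a b. if a = b then 1 else 0) X = (\<Sum>a<n. X a a)"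
proof -
  have "(\<Sum>b<n. (if a = b then 1 else 0) * X b a) = X a a" if "a < n" for a
    using that by (simp add: if_distrib[of "\<lambda>c. c * _"] cong: if_cong)
  then show ?thesis unfolding trace_prod_def by simp
qed

lemma dual_cert_le:
  assumes c: "dual_cert n I W P G" and Q: "povm n I Q"
  shows "(\<Sum>i\<in>I. Re (mtrace (Q i * W i))) \<le> (\<Sum>i\<in>I. Re (mtrace (P i * W i)))"
proof -
  have G: "G \<in> carrier_mat n n" using c unfolding dual_cert_def by (auto intro: psd_carrier)
  have le: "Re (mtrace (Q i * W i)) \<le> Re (trace_prod n (entries (Q i)) (entries G))" if i: "i \<in> I" for i
  proof -
    have Qi: "Q i \<in> carrier_mat n n" "gram_rep n (entries (Q i))"
      using povm_psd[OF Q i] unfolding psd_iff_gram_rep by auto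
    have Wi: "psd n (W i)" "gram_rep n (entries (G - W i))"
      using c i unfolding dual_cert_def psd_iff_gram_rep by auto
    then have Wc: "W i \<in> carrier_mat n n" by (intro psd_carrier)
    have "trace_prod n (entries (Q i)) (entries (G - W i))
        = trace_prod n (entries (Q i)) (\<lambda>a b. entries G a b - entries (W i) a b)"
      using Wc G by (intro trace_prod_cong) (auto simp: entries_def)
    then have "trace_prod n (entries (Q i)) (entries (G - W i))
        = trace_prod n (entries (Q i)) (entries G) - mtrace (Q i * W i)"
      by (simp add: trace_prod_diff_right mtrace_mult[OF Qi(1) Wc])
    moreover have "0 \<le> Re (trace_prod n (entries (Q i)) (entries (G - W i)))"
      using trace_prod_gram_rep(1)[OF Qi(2) Wi(2)] .
    ultimately show ?thesis by simp
  qed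
  have "(\<Sum>i\<in>I. trace_prod n (entries (Q i)) (entries G))
      = trace_prod n (\<lambda>a b. if a = b then 1 else 0) (entries G)"
    unfolding trace_prod_sum_left
    by (rule trace_prod_cong) (auto simp: entries_def povm_sum_entries[OF Q])
  also have "\<dots> = mtrace G"
    using G unfolding trace_prod_one mtrace_def entries_def by simp
  finally have "(\<Sum>i\<in>I. Re (trace_prod n (entries (Q i)) (entries G))) = Re (mtrace G)"
    by (simp flip: Re_sum)
  then show ?thesis
    using sum_mono[of I "\<lambda>i. Re (mtrace (Q i * W i))", OF le] c unfolding dual_cert_def by simp
qed

lemma msum_kron:
  assumes P: "\<And>i. i \<in> I \<Longrightarrow> P i \<in> carrier_mat n1 n1" and R: "\<And>j. j \<in> J \<Longrightarrow> R j \<in> carrier_mat n2 n2"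
  shows "msum (n1 * n2) (\<lambda>(i, j). kron (P i) (R j)) (I \<times> J) = kron (msum n1 P I) (msum n2 R J)"
proof (rule eq_matI)
  fix a b assume "a < dim_row (kron (msum n1 P I) (msum n2 R J))"
    "b < dim_col (kron (msum n1 P I) (msum n2 R J))"
  then have a: "a < n1 * n2" and b: "b < n1 * n2" unfolding kron_def msum_def by auto
  have "msum (n1 * n2) (\<lambda>(i, j). kron (P i) (R j)) (I \<times> J) $$ (a, b)
      = (\<Sum>(i, j)\<in>I \<times> J. P i $$ (a div n2, b div n2) * R j $$ (a mod n2, b mod n2))"
    using kron_entries[OF P R a b] a b unfolding msum_def entries_def by (auto intro!: sum.cong)
  also have "\<dots> = (\<Sum>i\<in>I. P i $$ (a div n2, b div n2)) * (\<Sum>j\<in>J. R j $$ (a mod n2, b mod n2))"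
    by (simp add: sum_product sum.cartesian_product)
  also have "\<dots> = kron (msum n1 P I) (msum n2 R J) $$ (a, b)"
    unfolding kron_def msum_def using a b div_mod_less[OF a] div_mod_less[OF b] by simp
  finally show "msum (n1 * n2) (\<lambda>(i, j). kron (P i) (R j)) (I \<times> J) $$ (a, b)
      = kron (msum n1 P I) (msum n2 R J) $$ (a, b)" .
qed (auto simp: kron_def msum_def)

lemma povm_kron:
  assumes P: "povm n1 I P" and R: "povm n2 J R"
  shows "povm (n1 * n2) (I \<times> J) (\<lambda>(i, j). kron (P i) (R j))"
  unfolding povm_def
proof (intro conjI ballI)
  show "finite (I \<times> J)" using P R unfolding povm_def by auto
  show "psd (n1 * n2) (case x of (i, j) \<Rightarrow> kron (P i) (R j))" if "x \<in> I \<times> J" for x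
    using that psd_kron povm_psd[OF P] povm_psd[OF R] by auto
  show "msum (n1 * n2) (\<lambda>(i, j). kron (P i) (R j)) (I \<times> J) = 1\<^sub>m (n1 * n2)"
    using P R by (simp add: msum_kron povm_carrier kron_one povm_def)
qed

lemma dual_cert_kron:
  assumes c1: "dual_cert n1 I W P G" and c2: "dual_cert n2 J V R H"
  shows "dual_cert (n1 * n2) (I \<times> J) (\<lambda>(i, j). kron (W i) (V j)) (\<lambda>(i, j). kron (P i) (R j))
           (kron G H)"
proof -
  have P: "povm n1 I P" and R: "povm n2 J R" and G: "psd n1 G" and H: "psd n2 H"
    and W: "\<And>i. i \<in> I \<Longrightarrow> psd n1 (W i) \<and> psd n1 (G - W i)"
    and V: "\<And>j. j \<in> J \<Longrightarrow> psd n2 (V j) \<and> psd n2 (H - V j)"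
    using c1 c2 unfolding dual_cert_def by auto
  have pos: "\<forall>x\<in>I \<times> J. psd (n1 * n2) ((\<lambda>(i, j). kron (W i) (V j)) x)
      \<and> psd (n1 * n2) (kron G H - (\<lambda>(i, j). kron (W i) (V j)) x)"
    using W V psd_kron psd_kron_diff[OF psd_carrier[OF G] psd_carrier[OF V[THEN conjunct1]] H] by auto
  have "Re (mtrace (kron G H)) = Re (mtrace G) * Re (mtrace H)"
    using mtrace_kron[OF psd_carrier[OF G] psd_carrier[OF H]] psd_mtrace_real[OF G] by simp
  also have "\<dots> = (\<Sum>i\<in>I. Re (mtrace (P i * W i))) * (\<Sum>j\<in>J. Re (mtrace (R j * V j)))"
    using c1 c2 unfolding dual_cert_def by simp
  also have "\<dots> = (\<Sum>(i, j)\<in>I \<times> J. Re (mtrace (kron (P i) (R j) * kron (W i) (V j))))"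
    unfolding sum_product sum.cartesian_product
  proof (rule sum.cong[OF refl], clarify)
    fix i j assume i: "i \<in> I" and j: "j \<in> J"
    have Pi: "psd n1 (P i)" and Rj: "psd n2 (R j)" using povm_psd[OF P i] povm_psd[OF R j] .
    have Wi: "psd n1 (W i)" and Vj: "psd n2 (V j)" using W[OF i] V[OF j] by auto
    show "Re (mtrace (P i * W i)) * Re (mtrace (R j * V j))
        = Re (mtrace (kron (P i) (R j) * kron (W i) (V j)))"
      using mtrace_mult_psd_real[OF Pi Wi] psd_carrier[OF Pi] psd_carrier[OF Rj] psd_carrier[OF Wi]
        psd_carrier[OF Vj]
      by (simp add: kron_mult mtrace_kron[of _ n1 _ n2])
  qed
  finally have "Re (mtrace (kron G H))
      = (\<Sum>x\<in>I \<times> J. Re (mtrace ((\<lambda>(i, j). kron (P i) (R j)) x * (\<lambda>(i, j). kron (W i) (V j)) x)))"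
    by (simp add: case_prod_unfold)
  then show ?thesis unfolding dual_cert_def using povm_kron[OF P R] psd_kron[OF G H] pos by blast
qed

lemma dual_cert_reindex:
  assumes inj: "inj_on h S" and c: "dual_cert n S (W \<circ> h) (P \<circ> h) G"
  shows "dual_cert n (h ` S) W P G"
proof -
  have p: "povm n S (P \<circ> h)" using c unfolding dual_cert_def by auto
  have "povm n (h ` S) P" unfolding povm_def
  proof (intro conjI ballI)
    show "finite (h ` S)" using p unfolding povm_def by auto
    show "psd n (P x)" if "x \<in> h ` S" for x
      using that p unfolding povm_def by auto
    have "msum n P (h ` S) = msum n (P \<circ> h) S"
      unfolding msum_def using sum.reindex[OF inj] by (intro eq_matI) auto
    then show "msum n P (h ` S) = 1\<^sub>m n" using p unfolding povm_def by simp
  qed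
  moreover have "(\<Sum>x\<in>h ` S. Re (mtrace (P x * W x))) = (\<Sum>s\<in>S. Re (mtrace (P (h s) * W (h s))))"
    using sum.reindex[OF inj] by simp
  ultimately show ?thesis using c unfolding dual_cert_def by auto
qed

lemma tuples_Suc: "tuples (Suc N) k = (\<lambda>(i, t). i # t) ` ({..<k 0} \<times> tuples N (\<lambda>m. k (Suc m)))"
proof
  show "tuples (Suc N) k \<subseteq> (\<lambda>(i, t). i # t) ` ({..<k 0} \<times> tuples N (\<lambda>m. k (Suc m)))"
  proof
    fix t assume t: "t \<in> tuples (Suc N) k"
    then obtain i t' where "t = i # t'" unfolding tuples_def by (cases t) auto
    then show "t \<in> (\<lambda>(i, t). i # t) ` ({..<k 0} \<times> tuples N (\<lambda>m. k (Suc m)))"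
      using t unfolding tuples_def by force
  qed
  show "(\<lambda>(i, t). i # t) ` ({..<k 0} \<times> tuples N (\<lambda>m. k (Suc m))) \<subseteq> tuples (Suc N) k"
    unfolding tuples_def by (auto simp: less_Suc_eq_0_disj)
qed

lemma dual_cert_unit: "dual_cert 1 (tuples 0 k) (\<lambda>t. 1\<^sub>m 1) (\<lambda>t. 1\<^sub>m 1) (1\<^sub>m 1)"
proof -
  have "tuples 0 k = {[]}" unfolding tuples_def by auto
  moreover have "psd 1 (1\<^sub>m 1)" unfolding psd_iff_gram_rep gram_rep_def entries_def
    by (auto intro!: exI[of _ "[\<lambda>_. 1]"])
  moreover have "psd 1 (1\<^sub>m 1 - 1\<^sub>m 1)" unfolding psd_iff_gram_rep gram_rep_def entries_def
    by (auto intro!: exI[of _ "[]"])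
  moreover have "povm 1 {[]} (\<lambda>t. 1\<^sub>m 1)"
    using calculation(2) unfolding povm_def msum_def by (auto intro!: eq_matI)
  ultimately show ?thesis unfolding dual_cert_def mtrace_def by simp
qed

lemma dual_cert_kron_list:
  assumes "\<forall>m<N. dual_cert (d m) {..<k m} (W m) (P m) (G m)"
  shows "dual_cert (\<Prod>m<N. d m) (tuples N k) (\<lambda>t. kron_list (map (\<lambda>m. W m (t ! m)) [0..<N]))
           (\<lambda>t. kron_list (map (\<lambda>m. P m (t ! m)) [0..<N])) (kron_list (map G [0..<N]))"
  using assms
proof (induct N arbitrary: d k W P G)
  case 0
  then show ?case using dual_cert_unit by (simp add: kron_list_def)
next
  case (Suc N)
  have "dual_cert (\<Prod>m<N. d (Suc m)) (tuples N (\<lambda>m. k (Suc m)))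
      (\<lambda>t. kron_list (map (\<lambda>m. W (Suc m) (t ! m)) [0..<N]))
      (\<lambda>t. kron_list (map (\<lambda>m. P (Suc m) (t ! m)) [0..<N])) (kron_list (map (\<lambda>m. G (Suc m)) [0..<N]))"
    using Suc.hyps[of "\<lambda>m. d (Suc m)" "\<lambda>m. k (Suc m)" "\<lambda>m. W (Suc m)" "\<lambda>m. P (Suc m)"
        "\<lambda>m. G (Suc m)"] Suc.prems by auto
  then have "dual_cert (d 0 * (\<Prod>m<N. d (Suc m))) ({..<k 0} \<times> tuples N (\<lambda>m. k (Suc m)))
      ((\<lambda>t. kron_list (map (\<lambda>m. W m (t ! m)) [0..<Suc N])) \<circ> (\<lambda>(i, t). i # t))
      ((\<lambda>t. kron_list (map (\<lambda>m. P m (t ! m)) [0..<Suc N])) \<circ> (\<lambda>(i, t). i # t))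
      (kron (G 0) (kron_list (map (\<lambda>m. G (Suc m)) [0..<N])))"
    using dual_cert_kron[of "d 0" "{..<k 0}" "W 0" "P 0" "G 0"] Suc.prems
    by (simp del: upt_Suc add: kron_list_upt_Suc comp_def case_prod_unfold)
  then show ?case unfolding tuples_Suc prod.lessThan_Suc_shift kron_list_upt_Suc[of G]
    by (rule dual_cert_reindex[rotated]) (auto simp: inj_on_def)
qed

lemma success_eq_sum_mtrace:
  assumes "\<And>i. i \<in> I \<Longrightarrow> Q i \<in> carrier_mat n n" and "\<And>i. i \<in> I \<Longrightarrow> \<rho> i \<in> carrier_mat n n"
  shows "success I p \<rho> Q = (\<Sum>i\<in>I. Re (mtrace (Q i * (complex_of_real (p i) \<cdot>\<^sub>m \<rho> i))))"
  unfolding success_def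
proof (intro sum.cong refl)
  fix i assume "i \<in> I"
  then show "p i * Re (mtrace (Q i * \<rho> i)) = Re (mtrace (Q i * (complex_of_real (p i) \<cdot>\<^sub>m \<rho> i)))"
    using mtrace_mult_smult[OF assms[OF \<open>i \<in> I\<close>], of "complex_of_real (p i)"] by simp
qed

lemma optimal_povm_if_dual_cert:
  assumes c: "dual_cert n I (\<lambda>i. complex_of_real (p i) \<cdot>\<^sub>m \<rho> i) P G"
  shows "optimal_povm n I p \<rho> P"
proof -
  have P: "povm n I P" using c unfolding dual_cert_def by blast
  have "complex_of_real (p i) \<cdot>\<^sub>m \<rho> i \<in> carrier_mat n n" if "i \<in> I" for i
    using c that unfolding dual_cert_def by (blast intro: psd_carrier)
  then have \<rho>: "\<rho> i \<in> carrier_mat n n" if "i \<in> I" for i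
    using that by (metis carrier_matD carrier_matI index_smult_mat(2,3))
  show ?thesis unfolding optimal_povm_def
  proof (intro conjI allI impI)
    fix Q assume Q: "povm n I Q"
    have "success I p \<rho> R = (\<Sum>i\<in>I. Re (mtrace (R i * (complex_of_real (p i) \<cdot>\<^sub>m \<rho> i))))"
      if "povm n I R" for R
      using povm_carrier[OF that] \<rho> by (rule success_eq_sum_mtrace)
    then show "success I p \<rho> Q \<le> success I p \<rho> P"
      using dual_cert_le[OF c Q] P Q by simp
  qed (rule P)
qed

section \<open>Optimal measurements admit dual certificates\<close>

lemma sesq_Px_eq_qform:
  assumes h: "herm_fun n P"
  shows "sesq n X (\<lambda>c. \<Sum>b<n. P c b * x b) x = qform n (\<lambda>a b. \<Sum>c<n. P a c * X c b) x"
proof -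
  have cy: "\<And>c. c < n \<Longrightarrow> cnj (\<Sum>b<n. P c b * x b) = (\<Sum>a<n. cnj (x a) * P a c)"
  proof -
    fix c assume c: "c < n"
    have "cnj (\<Sum>b<n. P c b * x b) = (\<Sum>a<n. cnj (P c a) * cnj (x a))" by simp
    also have "\<dots> = (\<Sum>a<n. cnj (x a) * P a c)"
    proof (rule sum.cong[OF refl])
      fix a assume "a \<in> {..<n}"
      then have "P a c = cnj (P c a)" using herm_funD[OF h c, of a] by simp
      then show "cnj (P c a) * cnj (x a) = cnj (x a) * P a c" by simp
    qed
    finally show "cnj (\<Sum>b<n. P c b * x b) = (\<Sum>a<n. cnj (x a) * P a c)" .
  qed
  have "sesq n X (\<lambda>c. \<Sum>b<n. P c b * x b) x = (\<Sum>c<n. \<Sum>b<n. (\<Sum>a<n. cnj (x a) * P a c) * X c b * x b)"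
    unfolding sesq_def using cy by (intro sum.cong refl) auto
  also have "\<dots> = (\<Sum>c<n. \<Sum>b<n. \<Sum>a<n. cnj (x a) * P a c * X c b * x b)"
    by (simp add: sum_distrib_right)
  also have "\<dots> = (\<Sum>c<n. \<Sum>a<n. \<Sum>b<n. cnj (x a) * P a c * X c b * x b)"
    by (rule sum.cong[OF refl]) (rule sum.swap)
  also have "\<dots> = (\<Sum>a<n. \<Sum>c<n. \<Sum>b<n. cnj (x a) * P a c * X c b * x b)"
    by (rule sum.swap)
  also have "\<dots> = (\<Sum>a<n. \<Sum>b<n. \<Sum>c<n. cnj (x a) * P a c * X c b * x b)"
    by (rule sum.cong[OF refl]) (rule sum.swap)
  also have "\<dots> = qform n (\<lambda>a b. \<Sum>c<n. P a c * X c b) x"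
    unfolding qform_def by (simp add: sum_distrib_left sum_distrib_right mult_ac)
  finally show ?thesis .
qed

definition sq_norm :: "nat \<Rightarrow> (nat \<Rightarrow> complex) \<Rightarrow> complex" where
  "sq_norm n x = (\<Sum>a<n. cnj (x a) * x a)"

lemma sq_norm_real: "Im (sq_norm n x) = 0" "0 \<le> Re (sq_norm n x)"
  unfolding sq_norm_def Re_sum Im_sum
  by (simp add: cnj_mult_self) (rule sum_nonneg, rule cnj_mult_self(1))

locale povm_perturbation =
  fixes n :: nat and I :: "'i set" and pf :: "'i \<Rightarrow> nat \<Rightarrow> nat \<Rightarrow> complex"
    and x :: "nat \<Rightarrow> complex" and j :: 'i and s :: real
  assumes fin: "finite I" and hm: "\<And>i. i \<in> I \<Longrightarrow> herm_fun n (pf i)"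
    and ps: "\<And>i z. i \<in> I \<Longrightarrow> 0 \<le> Re (qform n (pf i) z)"
    and one: "\<And>a b. a < n \<Longrightarrow> b < n \<Longrightarrow> (\<Sum>i\<in>I. pf i a b) = (if a = b then 1 else 0)"
    and jI: "j \<in> I" and s0: "0 \<le> s" and s1: "s * Re (sq_norm n x) \<le> 1"
begin

definition Px where "Px i a = (\<Sum>b<n. pf i a b * x b)"
definition xPx where "xPx i = qform n (pf i) x"
definition cs where "cs = complex_of_real s"
definition corr where "corr i = (if i = j then 2 * cs - cs * cs * sq_norm n x else 0)"

text \<open>\<open>pert i\<close> is \<open>(1 - s xx\<^sup>*) P\<^sub>i (1 - s xx\<^sup>*) + corr i xx\<^sup>*\<close>; the correction at \<open>j\<close> restores
  \<open>\<Sum>\<^sub>i pert i = 1\<close>, and it is positive as long as \<open>s |x|\<^sup>2 \<le> 1\<close>.\<close>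

definition pert where "pert i a b = pf i a b + (- cs) * (x a * cnj (Px i b)) + (- cs) * (Px i a * cnj (x b))
   + (cs * cs * xPx i) * (x a * cnj (x b)) + corr i * (x a * cnj (x b))"

lemma xPx_real: "i \<in> I \<Longrightarrow> cnj (xPx i) = xPx i"
  using qform_real[OF hm] unfolding xPx_def by (simp add: complex_eq_iff)

lemma sq_norm_cnj: "cnj (sq_norm n x) = sq_norm n x"
  using sq_norm_real(1) by (simp add: complex_eq_iff)

lemma corr_cnj: "cnj (corr i) = corr i"
  unfolding corr_def cs_def using sq_norm_cnj by auto

lemma corr_real: "corr i = complex_of_real (if i = j then 2 * s - s * s * Re (sq_norm n x) else 0)"
  unfolding corr_def cs_def using sq_norm_real(1)[of n x] by (auto simp: complex_eq_iff)

lemma corr_nonneg: "0 \<le> (if i = j then 2 * s - s * s * Re (sq_norm n x) else 0)"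
proof -
  have "s * s * Re (sq_norm n x) \<le> s" using s1 s0 by (metis mult.assoc mult_left_mono mult.right_neutral)
  then show ?thesis using s0 by auto
qed

lemma pert_herm_fun:
  assumes i: "i \<in> I"
  shows "herm_fun n (pert i)"
  unfolding herm_fun_def
proof (intro allI impI)
  fix a b assume a: "a < n" and b: "b < n"
  have "pf i b a = cnj (pf i a b)" using herm_funD[OF hm[OF i] a b] .
  then show "pert i b a = cnj (pert i a b)"
    unfolding pert_def using xPx_real[OF i] corr_cnj by (simp add: cs_def algebra_simps)
qed

lemma sesq_pf_eq_cinner_Px: "sesq n (pf i) z x = cnj (cinner n (Px i) z)"
proof -
  have "sesq n (pf i) z x = (\<Sum>a<n. cnj (z a) * Px i a)"
    unfolding sesq_def Px_def by (simp add: sum_distrib_left mult_ac)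
  also have "\<dots> = cnj (cinner n (Px i) z)" unfolding cinner_def by (simp add: mult.commute)
  finally show ?thesis .
qed

lemma qform_pert:
  assumes i: "i \<in> I"
  shows "qform n (pert i) z = qform n (pf i) (\<lambda>a. z a + (- cs * cinner n x z) * x a) + corr i * (cnj (cinner n x z) * cinner n x z)"
proof -
  let ?b = "cinner n x z" and ?g = "cinner n (Px i) z"
  have "qform n (pert i) z = qform n (pf i) z + (- cs) * (cnj ?b * ?g) + (- cs) * (cnj ?g * ?b)
     + (cs * cs * xPx i) * (cnj ?b * ?b) + corr i * (cnj ?b * ?b)"
    unfolding pert_def by (simp only: qform_lin qform_rank_one)
  moreover have "qform n (pf i) (\<lambda>a. z a + (- cs * ?b) * x a) = qform n (pf i) z + (- cs) * (cnj ?b * ?g) + (- cs) * (cnj ?g * ?b)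
     + (cs * cs * xPx i) * (cnj ?b * ?b)"
  proof -
    have e1: "sesq n (pf i) z x = cnj ?g" by (rule sesq_pf_eq_cinner_Px)
    have e2: "sesq n (pf i) x z = ?g" using sesq_herm_fun[OF hm[OF i], of x z] e1 by simp
    have "qform n (pf i) (\<lambda>a. z a + (- cs * ?b) * x a) = qform n (pf i) z + sesq n (pf i) z (\<lambda>a. (- cs * ?b) * x a)
       + sesq n (pf i) (\<lambda>a. (- cs * ?b) * x a) z + qform n (pf i) (\<lambda>a. (- cs * ?b) * x a)"
      by (rule qform_add)
    also have "\<dots> = qform n (pf i) z + (- cs * ?b) * cnj ?g + cnj (- cs * ?b) * ?g
       + cnj (- cs * ?b) * ((- cs * ?b) * xPx i)"
      by (simp only: sesq_scale_left sesq_scale_right qform_eq_sesq e1 e2 xPx_def)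
    also have "\<dots> = qform n (pf i) z + (- cs) * (cnj ?b * ?g) + (- cs) * (cnj ?g * ?b)
     + (cs * cs * xPx i) * (cnj ?b * ?b)"
      by (simp add: cs_def algebra_simps)
    finally show ?thesis .
  qed
  ultimately show ?thesis by simp
qed

lemma qform_pert_nonneg:
  assumes i: "i \<in> I"
  shows "0 \<le> Re (qform n (pert i) z)"
proof -
  have "0 \<le> Re (corr i * (cnj (cinner n x z) * cinner n x z))"
    unfolding corr_real using corr_nonneg[of i] cnj_mult_self[of "cinner n x z"] by simp
  then show ?thesis unfolding qform_pert[OF i] using ps[OF i] by (simp add: add_nonneg_nonneg)
qed

lemma sum_Px: "a < n \<Longrightarrow> (\<Sum>i\<in>I. Px i a) = x a"
proof -
  assume a: "a < n"
  have "(\<Sum>i\<in>I. Px i a) = (\<Sum>b<n. (\<Sum>i\<in>I. pf i a b) * x b)"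
    unfolding Px_def by (simp add: sum_distrib_right sum.swap[of _ I])
  also have "\<dots> = (\<Sum>b<n. (if a = b then x b else 0))"
    using one[OF a] by (intro sum.cong refl) auto
  also have "\<dots> = x a" using a by simp
  finally show ?thesis .
qed

lemma sum_xPx: "(\<Sum>i\<in>I. xPx i) = sq_norm n x"
proof -
  have "(\<Sum>i\<in>I. xPx i) = qform n (\<lambda>a b. \<Sum>i\<in>I. pf i a b) x" unfolding xPx_def by (rule qform_sum[OF fin])
  also have "\<dots> = (\<Sum>a<n. \<Sum>b<n. cnj (x a) * (if a = b then 1 else 0) * x b)"
    unfolding qform_def using one by (intro sum.cong refl) auto
  also have "\<dots> = (\<Sum>a<n. \<Sum>b<n. if b = a then cnj (x a) * x a else 0)"
    by (intro sum.cong refl) auto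
  also have "\<dots> = sq_norm n x" unfolding sq_norm_def by simp
  finally show ?thesis .
qed

lemma sum_corr: "(\<Sum>i\<in>I. corr i) = 2 * cs - cs * cs * sq_norm n x"
  unfolding corr_def using fin jI by simp

lemma sum_pert:
  assumes a: "a < n" and b: "b < n"
  shows "(\<Sum>i\<in>I. pert i a b) = (if a = b then 1 else 0)"
proof -
  have "(\<Sum>i\<in>I. pert i a b) = (\<Sum>i\<in>I. pf i a b) + (- cs) * (x a * cnj (\<Sum>i\<in>I. Px i b))
     + (- cs) * ((\<Sum>i\<in>I. Px i a) * cnj (x b)) + (cs * cs * (\<Sum>i\<in>I. xPx i)) * (x a * cnj (x b))
     + (\<Sum>i\<in>I. corr i) * (x a * cnj (x b))"
    unfolding pert_def by (simp add: sum.distrib sum_distrib_left sum_distrib_right sum_subtractf sum_negf mult_ac)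
  also have "\<dots> = (if a = b then 1 else 0)"
    unfolding one[OF a b] sum_Px[OF a] sum_Px[OF b] sum_xPx sum_corr by (simp add: algebra_simps)
  finally show ?thesis .
qed

lemma trace_prod_pert:
  "trace_prod n (pert i) X = trace_prod n (pf i) X + (- cs) * sesq n X (Px i) x + (- cs) * sesq n X x (Px i)
     + (cs * cs * xPx i) * sesq n X x x + corr i * sesq n X x x"
  unfolding pert_def by (simp only: trace_prod_lin trace_prod_rank_one)

lemma Re_trace_prod_pert:
  assumes h: "herm_fun n X"
  shows "Re (trace_prod n (pert i) X) = Re (trace_prod n (pf i) X) - 2 * s * Re (sesq n X (Px i) x)
     + s * s * Re (xPx i * qform n X x) + (if i = j then 2 * s - s * s * Re (sq_norm n x) else 0) * Re (qform n X x)"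
proof -
  have c: "sesq n X x (Px i) = cnj (sesq n X (Px i) x)" by (rule sesq_herm_fun[OF h])
  show ?thesis unfolding trace_prod_pert corr_real c qform_eq_sesq[symmetric] by (simp add: cs_def algebra_simps)
qed

lemma sum_Re_trace_prod_pert:
  assumes hX: "\<And>i. i \<in> I \<Longrightarrow> herm_fun n (X i)"
  shows "(\<Sum>i\<in>I. Re (trace_prod n (pert i) (X i))) = (\<Sum>i\<in>I. Re (trace_prod n (pf i) (X i)))
      - 2 * s * Re (qform n (\<lambda>a b. \<Sum>i\<in>I. \<Sum>c<n. pf i a c * X i c b) x)
      + s * s * (\<Sum>i\<in>I. Re (xPx i * qform n (X i) x))
      + (2 * s - s * s * Re (sq_norm n x)) * Re (qform n (X j) x)"
proof -
  have "(\<Sum>i\<in>I. Re (trace_prod n (pert i) (X i)))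
      = (\<Sum>i\<in>I. Re (trace_prod n (pf i) (X i)) - 2 * s * Re (sesq n (X i) (Px i) x)
          + s * s * Re (xPx i * qform n (X i) x)
          + (if i = j then 2 * s - s * s * Re (sq_norm n x) else 0) * Re (qform n (X i) x))"
    using Re_trace_prod_pert[OF hX] by (intro sum.cong refl) auto
  also have "\<dots> = (\<Sum>i\<in>I. Re (trace_prod n (pf i) (X i))) - 2 * s * (\<Sum>i\<in>I. Re (sesq n (X i) (Px i) x))
      + s * s * (\<Sum>i\<in>I. Re (xPx i * qform n (X i) x))
      + (\<Sum>i\<in>I. (if i = j then 2 * s - s * s * Re (sq_norm n x) else 0) * Re (qform n (X i) x))"
    by (simp only: sum.distrib sum_subtractf sum_distrib_left)
  also have "(\<Sum>i\<in>I. (if i = j then 2 * s - s * s * Re (sq_norm n x) else 0) * Re (qform n (X i) x))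
      = (2 * s - s * s * Re (sq_norm n x)) * Re (qform n (X j) x)"
    using fin jI by (simp add: if_distrib[of "\<lambda>c. c * _"] cong: if_cong)
  also have "(\<Sum>i\<in>I. Re (sesq n (X i) (Px i) x))
      = Re (qform n (\<lambda>a b. \<Sum>i\<in>I. \<Sum>c<n. pf i a c * X i c b) x)"
    using sesq_Px_eq_qform[OF hm] qform_sum[OF fin] unfolding Px_def[abs_def] by (simp flip: Re_sum)
  finally show ?thesis .
qed

lemma povm_pert: "povm n I (\<lambda>i. mat n n (\<lambda>(a, b). pert i a b))"
proof -
  have ent: "entries (mat n n (\<lambda>(a, b). pert i a b)) a b = pert i a b" if "a < n" "b < n" for i a b
    using that unfolding entries_def by simp
  have "psd n (mat n n (\<lambda>(a, b). pert i a b))" if i: "i \<in> I" for i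
    unfolding psd_iff_herm_fun
    using herm_fun_cong[OF pert_herm_fun[OF i] ent] qform_pert_nonneg[OF i] qform_cong[OF ent]
    by simp
  moreover have "msum n (\<lambda>i. mat n n (\<lambda>(a, b). pert i a b)) I = 1\<^sub>m n"
  proof (rule eq_matI)
    fix a b assume "a < dim_row (1\<^sub>m n)" "b < dim_col (1\<^sub>m n)"
    then show "msum n (\<lambda>i. mat n n (\<lambda>(a, b). pert i a b)) I $$ (a, b) = 1\<^sub>m n $$ (a, b)"
      using sum_pert[of a b] unfolding msum_def by simp
  qed (simp_all add: msum_def)
  ultimately show ?thesis unfolding povm_def using fin by blast
qed

end

lemma nonpos_if_quadratic_nonpos:
  fixes L M \<delta> :: real
  assumes "0 < \<delta>" and "\<And>s. 0 < s \<Longrightarrow> s \<le> \<delta> \<Longrightarrow> s * L + s * s * M \<le> 0"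
  shows "L \<le> 0"
proof (rule tendsto_lowerbound)
  show "((\<lambda>s. - s * M) \<longlongrightarrow> 0) (at_right 0)"
    by (auto intro!: tendsto_eq_intros)
  have "\<forall>\<^sub>F s in at_right 0. s \<in> {0<..<\<delta>}"
    using assms(1) by (rule eventually_at_right_real)
  then show "\<forall>\<^sub>F s in at_right 0. L \<le> - s * M"
  proof (rule eventually_mono)
    fix s :: real assume "s \<in> {0<..<\<delta>}"
    then have "s * (L + s * M) \<le> 0" and "0 < s"
      using assms(2)[of s] by (auto simp: algebra_simps)
    then show "L \<le> - s * M" by (simp add: mult_le_0_iff)
  qed
qed simp

lemma Re_qform_herm_part: "Re (qform n (\<lambda>a b. (f a b + cnj (f b a)) / 2) x) = Re (qform n f x)"
proof -
  have "qform n (\<lambda>a b. (f a b + cnj (f b a)) / 2) x = (qform n f x + qform n (\<lambda>a b. cnj (f b a)) x) / 2"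
  proof -
    have "qform n (\<lambda>a b. (f a b + cnj (f b a)) / 2) x
        = (\<Sum>a<n. \<Sum>b<n. (cnj (x a) * f a b * x b + cnj (x a) * cnj (f b a) * x b) / 2)"
      unfolding qform_def by (intro sum.cong refl) (simp add: algebra_simps add_divide_distrib)
    then show ?thesis
      unfolding qform_def by (simp only: sum_divide_distrib[symmetric] sum.distrib)
  qed
  also have "\<dots> = (qform n f x + cnj (qform n f x)) / 2"
    by (simp only: qform_adjoint)
  finally have eq: "qform n (\<lambda>a b. (f a b + cnj (f b a)) / 2) x = (qform n f x + cnj (qform n f x)) / 2" .
  show ?thesis unfolding eq by simp
qed

locale optimal_discrimination =
  fixes n :: nat and I :: "'i set" and p :: "'i \<Rightarrow> real" and \<rho> P :: "'i \<Rightarrow> complex mat"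
  assumes ens: "ensemble n I p \<rho>" and opt: "optimal_povm n I p \<rho> P"
begin

definition W where "W i = complex_of_real (p i) \<cdot>\<^sub>m \<rho> i"

definition \<Gamma> where "\<Gamma> a b = (\<Sum>i\<in>I. \<Sum>c<n. entries (P i) a c * entries (W i) c b)"

definition G where "G = mat n n (\<lambda>(a, b). (\<Gamma> a b + cnj (\<Gamma> b a)) / 2)"

lemma finite_I: "finite I"
  using ens by (simp add: ensemble_def)

lemma povm_P: "povm n I P"
  using opt by (simp add: optimal_povm_def)

lemma psd_\<rho>: "i \<in> I \<Longrightarrow> psd n (\<rho> i)"
  using ens by (simp add: ensemble_def density_def)

lemma carrier_\<rho>: "i \<in> I \<Longrightarrow> \<rho> i \<in> carrier_mat n n"
  by (rule psd_carrier[OF psd_\<rho>])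

lemma psd_W:
  assumes i: "i \<in> I"
  shows "psd n (W i)"
proof -
  have r: "\<rho> i \<in> carrier_mat n n" "gram_rep n (entries (\<rho> i))"
    using psd_\<rho>[OF i] unfolding psd_iff_gram_rep by auto
  have pi: "0 \<le> p i" using ens i by (simp add: ensemble_def)
  have "gram_rep n (entries (W i))"
    by (rule gram_rep_cong[OF gram_rep_scale[OF r(2) pi]]) (use r(1) in \<open>auto simp: W_def entries_def\<close>)
  moreover have "W i \<in> carrier_mat n n" using r(1) unfolding W_def by simp
  ultimately show ?thesis unfolding psd_iff_gram_rep by blast
qed

lemma success_eq_trace_prod:
  assumes Q: "povm n I Q"
  shows "success I p \<rho> Q = (\<Sum>i\<in>I. Re (trace_prod n (entries (Q i)) (entries (W i))))"
proof -
  have "success I p \<rho> Q = (\<Sum>i\<in>I. Re (mtrace (Q i * W i)))"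
    unfolding W_def by (rule success_eq_sum_mtrace[OF povm_carrier[OF Q] carrier_\<rho>])
  also have "\<dots> = (\<Sum>i\<in>I. Re (trace_prod n (entries (Q i)) (entries (W i))))"
    by (intro sum.cong refl) (simp add: mtrace_mult[OF povm_carrier[OF Q] psd_carrier[OF psd_W]])
  finally show ?thesis .
qed

lemma qform_W_le_\<Gamma>:
  assumes j: "j \<in> I"
  shows "Re (qform n (entries (W j)) x) \<le> Re (qform n \<Gamma> x)"
proof -
  define cr where "cr = Re (sq_norm n x)"
  have cr0: "0 \<le> cr" unfolding cr_def by (rule sq_norm_real(2))
  have hP: "herm_fun n (entries (P i))" and pP: "0 \<le> Re (qform n (entries (P i)) z)" if "i \<in> I" for i z
    using povm_psd[OF povm_P that] unfolding psd_iff_herm_fun by auto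
  have hW: "herm_fun n (entries (W i))" if "i \<in> I" for i
    using psd_W[OF that] unfolding psd_iff_herm_fun by blast
  define M where "M = (\<Sum>i\<in>I. Re (qform n (entries (P i)) x * qform n (entries (W i)) x))
    - cr * Re (qform n (entries (W j)) x)"
  have "2 * (Re (qform n (entries (W j)) x) - Re (qform n \<Gamma> x)) \<le> 0"
  proof (rule nonpos_if_quadratic_nonpos)
    show "0 < 1 / (cr + 1)" using cr0 by simp
  next
    fix s :: real assume s0: "0 < s" and sd: "s \<le> 1 / (cr + 1)"
    have "s * cr \<le> cr / (cr + 1)" using mult_right_mono[OF sd cr0] by simp
    also have "\<dots> \<le> 1" using cr0 by simp
    finally have s1: "s * Re (sq_norm n x) \<le> 1" unfolding cr_def .
    interpret pt: povm_perturbation n I "\<lambda>i. entries (P i)" x j s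
      using finite_I hP pP povm_sum_entries[OF povm_P] j s0 s1
      by unfold_locales (auto simp: entries_def)
    define Q where "Q i = mat n n (\<lambda>(a, b). pt.pert i a b)" for i
    have "success I p \<rho> Q \<le> success I p \<rho> P"
      using opt pt.povm_pert unfolding optimal_povm_def Q_def by blast
    moreover have "trace_prod n (entries (Q i)) (entries (W i)) = trace_prod n (pt.pert i) (entries (W i))"
      for i by (rule trace_prod_cong) (auto simp: Q_def entries_def)
    ultimately have le: "(\<Sum>i\<in>I. Re (trace_prod n (pt.pert i) (entries (W i))))
        \<le> (\<Sum>i\<in>I. Re (trace_prod n (entries (P i)) (entries (W i))))"
      using success_eq_trace_prod[OF povm_P] success_eq_trace_prod pt.povm_pert
      unfolding Q_def by simp
    show "s * (2 * (Re (qform n (entries (W j)) x) - Re (qform n \<Gamma> x))) + s * s * M \<le> 0"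
      using le pt.sum_Re_trace_prod_pert[of "\<lambda>i. entries (W i)", OF hW]
      unfolding M_def cr_def pt.xPx_def \<Gamma>_def[abs_def] by (simp add: algebra_simps)
  qed
  then show ?thesis by simp
qed

lemma entries_G: "a < n \<Longrightarrow> b < n \<Longrightarrow> entries G a b = (\<Gamma> a b + cnj (\<Gamma> b a)) / 2"
  unfolding G_def entries_def by simp

lemma carrier_G: "G \<in> carrier_mat n n"
  unfolding G_def by simp

lemma psd_G_minus_W:
  assumes j: "j \<in> I"
  shows "psd n (G - W j)"
proof -
  have Wj: "W j \<in> carrier_mat n n" "herm_fun n (entries (W j))"
    using psd_W[OF j] unfolding psd_iff_herm_fun by auto
  have e: "entries (G - W j) a b = (\<Gamma> a b + cnj (\<Gamma> b a)) / 2 - entries (W j) a b"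
    if "a < n" "b < n" for a b
    using that entries_G Wj(1) unfolding entries_def by simp
  have "herm_fun n (\<lambda>a b. (\<Gamma> a b + cnj (\<Gamma> b a)) / 2)"
    unfolding herm_fun_def by (simp add: add.commute)
  then have "herm_fun n (entries (G - W j))"
    by (rule herm_fun_cong[OF herm_fun_diff[OF _ Wj(2)] e])
  moreover have "0 \<le> Re (qform n (entries (G - W j)) x)" for x
    using qform_W_le_\<Gamma>[OF j, of x] Re_qform_herm_part[of n \<Gamma> x]
    by (simp add: qform_cong[OF e] qform_diff)
  moreover have "G - W j \<in> carrier_mat n n" using carrier_G Wj(1) by auto
  ultimately show ?thesis unfolding psd_iff_herm_fun by blast
qed

lemma psd_G: "psd n G"
proof (cases "I = {}")
  case True
  have "n = 0"
  proof (rule ccontr)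
    assume "n \<noteq> 0"
    then show False using povm_sum_entries[OF povm_P, of 0 0] True by simp
  qed
  then show ?thesis unfolding psd_iff_gram_rep gram_rep_def using carrier_G by auto
next
  case False
  then obtain j where j: "j \<in> I" by auto
  have "gram_rep n (\<lambda>a b. entries (G - W j) a b + entries (W j) a b)"
    using gram_rep_add psd_G_minus_W[OF j] psd_W[OF j] unfolding psd_iff_gram_rep by blast
  then have "gram_rep n (entries G)"
    by (rule gram_rep_cong) (use carrier_G psd_carrier[OF psd_W[OF j]] in \<open>auto simp: entries_def\<close>)
  then show ?thesis unfolding psd_iff_gram_rep using carrier_G by simp
qed

lemma Re_mtrace_G: "Re (mtrace G) = (\<Sum>i\<in>I. Re (mtrace (P i * W i)))"
proof -
  have "Re (mtrace G) = Re (\<Sum>a<n. \<Gamma> a a)"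
    unfolding mtrace_def G_def by (simp add: Re_sum)
  also have "(\<Sum>a<n. \<Gamma> a a) = (\<Sum>i\<in>I. trace_prod n (entries (P i)) (entries (W i)))"
    unfolding \<Gamma>_def trace_prod_def by (rule sum.swap)
  also have "\<dots> = (\<Sum>i\<in>I. mtrace (P i * W i))"
    using mtrace_mult[OF povm_carrier[OF povm_P] psd_carrier[OF psd_W]] by simp
  finally show ?thesis by (simp add: Re_sum)
qed

lemma dual_cert_G: "dual_cert n I W P G"
  unfolding dual_cert_def using povm_P psd_G psd_W psd_G_minus_W Re_mtrace_G by blast

end

lemma optimal_povm_imp_dual_cert:
  assumes "ensemble n I p \<rho>" and "optimal_povm n I p \<rho> P"
  shows "\<exists>G. dual_cert n I (\<lambda>i. complex_of_real (p i) \<cdot>\<^sub>m \<rho> i) P G"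
proof -
  interpret optimal_discrimination n I p \<rho> P
    using assms by unfold_locales
  show ?thesis using dual_cert_G unfolding W_def[abs_def] by blast
qed

theorem mainTheorem15:
  fixes N :: nat and d k :: "nat \<Rightarrow> nat"
    and q :: "nat \<Rightarrow> nat \<Rightarrow> real"
    and \<sigma> Pov :: "nat \<Rightarrow> nat \<Rightarrow> complex mat"
  assumes ens: "\<forall>m<N. ensemble (d m) {..<k m} (q m) (\<sigma> m)"
    and opt: "\<forall>m<N. optimal_povm (d m) {..<k m} (q m) (\<sigma> m) (Pov m)"
  shows "optimal_povm (\<Prod>m<N. d m) (tuples N k)
           (\<lambda>t. \<Prod>m<N. q m (t ! m))
           (\<lambda>t. kron_list (map (\<lambda>m. \<sigma> m (t ! m)) [0..<N]))
           (\<lambda>t. kron_list (map (\<lambda>m. Pov m (t ! m)) [0..<N]))"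
proof -
  have "\<forall>m. \<exists>G. m < N \<longrightarrow> dual_cert (d m) {..<k m} (\<lambda>i. complex_of_real (q m i) \<cdot>\<^sub>m \<sigma> m i) (Pov m) G"
    using optimal_povm_imp_dual_cert ens opt by blast
  then obtain G where
    "\<forall>m<N. dual_cert (d m) {..<k m} (\<lambda>i. complex_of_real (q m i) \<cdot>\<^sub>m \<sigma> m i) (Pov m) (G m)"
    by metis
  then have "dual_cert (\<Prod>m<N. d m) (tuples N k)
      (\<lambda>t. kron_list (map (\<lambda>m. complex_of_real (q m (t ! m)) \<cdot>\<^sub>m \<sigma> m (t ! m)) [0..<N]))
      (\<lambda>t. kron_list (map (\<lambda>m. Pov m (t ! m)) [0..<N])) (kron_list (map G [0..<N]))"
    by (rule dual_cert_kron_list)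
  then show ?thesis
    by (intro optimal_povm_if_dual_cert)
      (simp add: kron_list_smult atLeast0LessThan flip: prod.distinct_set_conv_list)
qed
end
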